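(* For any integer $g\ge 0$, \[\sum_{S\in\mathcal{B}(g)}e_2(S)\le 2F_{g+1},\] where $F_n$ denotes the $n$-th Fibonacci number ($F_1=F_2=1$, $F_{n+2}=F_{n+1}+F_n$).
   Context: A numerical semigroup $S$ is a submonoid of $\mathbb{N}_0$ with finite complement; its genus is the size of the complement, $m(S)$ is its smallest nonzero element, $F(S)$ is the largest element of the complement (Frobenius number), and $e(S)$ is the size of its minimal generating set $(S\setminus\{0\})\setminus((S\setminus\{0\})+(S\setminus\{0\}))$. Define $e_1(S)=\#([m(S),2m(S)-1]\cap S)$ and $e_2(S)=e(S)-e_1(S)$. $\mathcal{B}(g)$ is the set of numerical semigroups $S$ of genus $g$ with $F(S)<2m(S)$. *)

theory Defs
  imports Main "HOL-Number_Theory.Fib"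
begin

definition numerical_semigroup :: "nat set \<Rightarrow> bool" where
  "numerical_semigroup S \<longleftrightarrow> 0 \<in> S \<and> (\<forall>a\<in>S. \<forall>b\<in>S. a + b \<in> S) \<and> finite (UNIV - S)"

definition genus :: "nat set \<Rightarrow> nat" where
  "genus S = card (UNIV - S)"

definition multiplicity_ns :: "nat set \<Rightarrow> nat" where
  "multiplicity_ns S = (LEAST x. x \<in> S \<and> 0 < x)"

definition frobenius :: "nat set \<Rightarrow> int" where
  "frobenius S = (if UNIV - S = {} then -1 else int (Max (UNIV - S)))"

definition min_generators :: "nat set \<Rightarrow> nat set" where
  "min_generators S = (S - {0}) - {a + b | a b. a \<in> S - {0} \<and> b \<in> S - {0}}"

definition embdim :: "nat set \<Rightarrow> nat" where
  "embdim S = card (min_generators S)"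

definition e1 :: "nat set \<Rightarrow> nat" where
  "e1 S = card ({multiplicity_ns S .. 2 * multiplicity_ns S - 1} \<inter> S)"

definition e2 :: "nat set \<Rightarrow> int" where
  "e2 S = int (embdim S) - int (e1 S)"

definition B_set :: "nat \<Rightarrow> nat set set" where
  "B_set g = {S. numerical_semigroup S \<and> genus S = g \<and> frobenius S < 2 * int (multiplicity_ns S)}"

end

theory Submission
  imports Defs
begin

(* A semigroup S in B(g) of multiplicity m equals {0, m} \<union> (m + A) \<union> [2m, \<infinity>) for
   A = {a \<in> [1, m) | m + a \<in> S}, and |A| + g + 2 = 2m.  A minimal generator above 2m - 1 has the
   form 2m + j with j \<in> [1, m) outside A \<union> (A + A), so e2(S) is at most the number of such
   candidates j.  Summing over all pairs (m, A) of genus g gives t(g) with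
   t(g + 2) \<le> t(g + 1) + t(g) + r(g): dropping m - 1 from A (genus g + 1) keeps the candidates, and
   if m - 1 \<notin> A (genus g) the only new candidate is m - 1, which occurs exactly when no two
   elements of A sum to m - 1.  Peeling off the outer pair {1, m - 1} shows that the number r(g)
   of such reflection-free pairs satisfies r(g) \<le> r(g - 4) + 2 r(g - 3); it grows more slowly than
   the Fibonacci numbers, and a potential-function induction gives t(g) \<le> 2 F(g + 1). *)

lemma numerical_semigroup_multiplicity:
  assumes "numerical_semigroup S"
  shows "multiplicity_ns S \<in> S" "0 < multiplicity_ns S"
proof -
  have "finite (UNIV - S)" using assms unfolding numerical_semigroup_def by blast
  then have "infinite S" using infinite_UNIV_nat by (metis Diff_infinite_finite)
  then have "\<not> S \<subseteq> {0}" using finite_subset by blast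
  then obtain x where "x \<in> S" "0 < x" by blast
  then have "multiplicity_ns S \<in> S \<and> 0 < multiplicity_ns S"
    unfolding multiplicity_ns_def by (rule LeastI[where P = "\<lambda>x. x \<in> S \<and> 0 < x", OF conjI])
  then show "multiplicity_ns S \<in> S" "0 < multiplicity_ns S" by auto
qed

lemma not_mem_below_multiplicity: "0 < x \<Longrightarrow> x < multiplicity_ns S \<Longrightarrow> x \<notin> S"
  unfolding multiplicity_ns_def using not_less_Least by blast

lemma mem_above_frobenius:
  assumes "numerical_semigroup S" "frobenius S < int x"
  shows "x \<in> S"
proof (rule ccontr)
  assume "x \<notin> S"
  moreover have "finite (UNIV - S)" using assms(1) unfolding numerical_semigroup_def by blast
  ultimately have "int x \<le> frobenius S" unfolding frobenius_def by auto
  with assms(2) show False by simp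
qed

definition B_code :: "nat set \<Rightarrow> nat \<times> nat set" where
  "B_code S = (multiplicity_ns S, {a \<in> {1..<multiplicity_ns S}. multiplicity_ns S + a \<in> S})"

definition B_codes :: "nat \<Rightarrow> (nat \<times> nat set) set" where
  "B_codes g = {(m, A). A \<subseteq> {1..<m} \<and> card A + g + 2 = 2 * m}"

definition e2_candidates :: "nat \<Rightarrow> nat set \<Rightarrow> nat set" where
  "e2_candidates m A = {j \<in> {1..<m} - A. \<forall>a\<in>A. \<forall>b\<in>A. a + b \<noteq> j}"

context
  fixes S :: "nat set" and m :: nat and A :: "nat set"
  assumes S: "numerical_semigroup S" "frobenius S < 2 * int (multiplicity_ns S)"
    and code: "B_code S = (m, A)"
begin

lemma mem_iff_B_code:
  "x \<in> S \<longleftrightarrow> x = 0 \<or> x = m \<or> (m < x \<and> x < 2 * m \<and> x - m \<in> A) \<or> 2 * m \<le> x"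
proof -
  have m: "m = multiplicity_ns S" and A: "A = {a \<in> {1..<m}. m + a \<in> S}"
    using code unfolding B_code_def by auto
  have "0 \<in> S" using S(1) unfolding numerical_semigroup_def by blast
  moreover have "m \<in> S" using numerical_semigroup_multiplicity(1)[OF S(1)] m by simp
  moreover have "x \<notin> S" if "0 < x" "x < m" using not_mem_below_multiplicity that m by simp
  moreover have "x \<in> S" if "2 * m \<le> x" using mem_above_frobenius[OF S(1)] S(2) that m by simp
  moreover have "x = m + (x - m)" if "m < x" by (simp add: that less_imp_le)
  ultimately show ?thesis unfolding A by (cases "x < m"; cases "2 * m \<le> x"; cases "x = m") auto
qed

lemma gaps_B_code: "UNIV - S = {1..<m} \<union> (\<lambda>a. m + a) ` ({1..<m} - A)"
proof -
  have "x \<in> (\<lambda>a. m + a) ` ({1..<m} - A) \<longleftrightarrow> m < x \<and> x < 2 * m \<and> x - m \<notin> A" for x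
  proof
    assume "m < x \<and> x < 2 * m \<and> x - m \<notin> A"
    then show "x \<in> (\<lambda>a. m + a) ` ({1..<m} - A)" by (intro image_eqI[of _ _ "x - m"]) auto
  qed auto
  then show ?thesis using mem_iff_B_code by auto
qed

lemma genus_B_code: "card A + genus S + 2 = 2 * m"
proof -
  have A: "A \<subseteq> {1..<m}" using code unfolding B_code_def by auto
  then have "card A \<le> m - 1" using card_mono[of "{1..<m}" A] by simp
  moreover have "0 < m" using numerical_semigroup_multiplicity(2)[OF S(1)] code
    unfolding B_code_def by simp
  moreover have "genus S = (m - 1) + ((m - 1) - card A)"
  proof -
    have "genus S = card {1..<m} + card ((\<lambda>a. m + a) ` ({1..<m} - A))"
      unfolding genus_def gaps_B_code by (rule card_Un_disjoint) auto
    also have "\<dots> = (m - 1) + ((m - 1) - card A)"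
      using A by (simp add: card_image card_Diff_subset finite_subset)
    finally show ?thesis .
  qed
  ultimately show ?thesis by linarith
qed

lemma min_generators_B_code:
  "min_generators S \<subseteq> ({m .. 2 * m - 1} \<inter> S) \<union> (\<lambda>j. 2 * m + j) ` e2_candidates m A"
proof
  fix x assume x: "x \<in> min_generators S"
  have m: "m \<in> S" "0 < m" using numerical_semigroup_multiplicity[OF S(1)] code
    unfolding B_code_def by auto
  have "x \<in> S" "x \<noteq> 0" using x unfolding min_generators_def by auto
  have not_sum: "x \<noteq> y + z" if "y \<in> S" "z \<in> S" "y \<noteq> 0" "z \<noteq> 0" for y z
    using x that unfolding min_generators_def by blast
  show "x \<in> ({m .. 2 * m - 1} \<inter> S) \<union> (\<lambda>j. 2 * m + j) ` e2_candidates m A"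
  proof (cases "x < 2 * m")
    case True
    with \<open>x \<in> S\<close> \<open>x \<noteq> 0\<close> show ?thesis using mem_iff_B_code by auto
  next
    case False
    have "x \<noteq> m + m" using not_sum m by blast
    moreover have "\<not> 3 * m \<le> x"
      using not_sum[of m "x - m"] m mem_iff_B_code[of "x - m"] by auto
    ultimately obtain j where j: "x = 2 * m + j" "j \<in> {1..<m}"
      using False by (intro that[of "x - 2 * m"]) auto
    have mA: "m + a \<in> S" if "a \<in> A" for a
      using that code unfolding B_code_def by auto
    have "j \<notin> A" using not_sum[of m "m + j"] m j mA by auto
    moreover have "a + b \<noteq> j" if "a \<in> A" "b \<in> A" for a b
      using not_sum[of "m + a" "m + b"] mA[OF that(1)] mA[OF that(2)] m j by auto
    ultimately show ?thesis using j unfolding e2_candidates_def by auto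
  qed
qed

lemma e2_le_card_e2_candidates: "e2 S \<le> int (card (e2_candidates m A))"
proof -
  have "finite (e2_candidates m A)" unfolding e2_candidates_def by simp
  then have "embdim S \<le> card (({m .. 2 * m - 1} \<inter> S) \<union> (\<lambda>j. 2 * m + j) ` e2_candidates m A)"
    unfolding embdim_def by (intro card_mono min_generators_B_code) auto
  also have "\<dots> \<le> card ({m .. 2 * m - 1} \<inter> S) + card (e2_candidates m A)"
    by (intro card_Un_le[THEN order_trans] add_left_mono card_image_le) fact
  also have "card ({m .. 2 * m - 1} \<inter> S) = e1 S"
    using code unfolding e1_def B_code_def by simp
  finally show ?thesis unfolding e2_def by simp
qed

end

lemma inj_on_B_code: "inj_on B_code (B_set g)"
proof (rule inj_onI)
  fix S T assume "S \<in> B_set g" "T \<in> B_set g" and code: "B_code S = B_code T"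
  then have S: "numerical_semigroup S" "frobenius S < 2 * int (multiplicity_ns S)"
    and T: "numerical_semigroup T" "frobenius T < 2 * int (multiplicity_ns T)"
    unfolding B_set_def by auto
  obtain m A where cS: "B_code S = (m, A)" by fastforce
  with code have cT: "B_code T = (m, A)" by simp
  have "x \<in> S \<longleftrightarrow> x \<in> T" for x
    using mem_iff_B_code[OF S cS, of x] mem_iff_B_code[OF T cT, of x] by simp
  then show "S = T" by blast
qed

lemma B_code_in_B_codes:
  assumes "S \<in> B_set g"
  shows "B_code S \<in> B_codes g"
proof -
  obtain m A where code: "B_code S = (m, A)" by fastforce
  then have "A \<subseteq> {1..<m}" unfolding B_code_def by auto
  moreover have "card A + genus S + 2 = 2 * m"
    using genus_B_code[OF _ _ code] assms unfolding B_set_def by blast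
  ultimately show ?thesis using assms code unfolding B_set_def B_codes_def by auto
qed

lemma finite_B_codes: "finite (B_codes g)"
proof (rule finite_subset)
  show "B_codes g \<subseteq> {..g + 1} \<times> Pow {1..<g + 1}"
  proof
    fix p assume "p \<in> B_codes g"
    then obtain m A where p: "p = (m, A)" and A: "A \<subseteq> {1..<m}" and card: "card A + g + 2 = 2 * m"
      unfolding B_codes_def by auto
    have "card A \<le> m - 1" using card_mono[OF _ A] by simp
    then have "m \<le> g + 1" using card by linarith
    then show "p \<in> {..g + 1} \<times> Pow {1..<g + 1}" using p A by auto
  qed
qed simp

lemma card_e2_candidates_le:
  assumes "(m, A) \<in> B_codes g"
  shows "2 * card (e2_candidates m A) \<le> g"
proof -
  have A: "A \<subseteq> {1..<m}" and card: "card A + g + 2 = 2 * m" using assms unfolding B_codes_def by auto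
  have "card (e2_candidates m A) \<le> card ({1..<m} - A)"
    unfolding e2_candidates_def by (rule card_mono) auto
  also have "\<dots> = (m - 1) - card A" using A by (simp add: card_Diff_subset finite_subset)
  finally show ?thesis using card by linarith
qed

definition candidate_total :: "nat \<Rightarrow> nat" where
  "candidate_total g = (\<Sum>(m, A)\<in>B_codes g. card (e2_candidates m A))"

lemma candidate_total_eq_0: "g \<le> 1 \<Longrightarrow> candidate_total g = 0"
  unfolding candidate_total_def using card_e2_candidates_le[of _ _ g]
  by (intro sum.neutral) fastforce

definition reflection_free :: "nat \<Rightarrow> nat set \<Rightarrow> bool" where
  "reflection_free m A \<longleftrightarrow> (\<forall>a\<in>A. \<forall>b\<in>A. a + b \<noteq> m)"

definition reflection_free_codes :: "nat \<Rightarrow> (nat \<times> nat set) set" where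
  "reflection_free_codes g = {(m, A) \<in> B_codes g. reflection_free m A}"

lemma finite_reflection_free_codes: "finite (reflection_free_codes g)"
  by (rule finite_subset[OF _ finite_B_codes]) (auto simp: reflection_free_codes_def)

lemma B_codes_Suc_Suc_subset:
  "B_codes (Suc (Suc g)) \<subseteq>
     (\<lambda>(m, A). (Suc m, insert m A)) ` B_codes (Suc g) \<union> (\<lambda>(m, A). (Suc m, A)) ` B_codes g"
proof safe
  fix m A assume "(m, A) \<in> B_codes (Suc (Suc g))"
  then have A: "A \<subseteq> {1..<m}" and card: "card A + g + 4 = 2 * m" unfolding B_codes_def by auto
  then obtain k where m: "m = Suc k" by (cases m) auto
  have fin: "finite A" using A finite_subset by blast
  assume notin: "(m, A) \<notin> (\<lambda>(m, A). (Suc m, A)) ` B_codes g"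
  show "(m, A) \<in> (\<lambda>(m, A). (Suc m, insert m A)) ` B_codes (Suc g)"
  proof (cases "k \<in> A")
    case True
    then have "0 < card A" using fin by (auto simp: card_gt_0_iff)
    with True have "(k, A - {k}) \<in> B_codes (Suc g)"
      using A card fin m unfolding B_codes_def by (auto simp: card_Diff_singleton)
    moreover have "A = insert k (A - {k})" using True by blast
    ultimately show ?thesis using m by (auto intro: image_eqI[of _ _ "(k, A - {k})"])
  next
    case False
    then have "(k, A) \<in> B_codes g" using A card m unfolding B_codes_def by (auto simp: less_Suc_eq)
    then show ?thesis using notin m by auto
  qed
qed

lemma e2_candidates_Suc_insert:
  "A \<subseteq> {1..<m} \<Longrightarrow> e2_candidates (Suc m) (insert m A) = e2_candidates m A"
  unfolding e2_candidates_def by auto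

lemma e2_candidates_Suc:
  assumes "A \<subseteq> {1..<m}" "0 < m"
  shows "e2_candidates (Suc m) A =
    (if reflection_free m A then insert m (e2_candidates m A) else e2_candidates m A)"
  using assms unfolding e2_candidates_def reflection_free_def by (auto simp: less_Suc_eq)

lemma card_e2_candidates_Suc:
  assumes "A \<subseteq> {1..<m}" "0 < m"
  shows "card (e2_candidates (Suc m) A) =
    card (e2_candidates m A) + (if reflection_free m A then 1 else 0)"
proof -
  have "finite (e2_candidates m A)" "m \<notin> e2_candidates m A" unfolding e2_candidates_def by auto
  then show ?thesis using e2_candidates_Suc[OF assms] by simp
qed

lemma candidate_total_Suc_Suc_le:
  "candidate_total (Suc (Suc g))
     \<le> candidate_total (Suc g) + candidate_total g + card (reflection_free_codes g)"
proof -
  let ?c = "\<lambda>(m, A). card (e2_candidates m A)"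
  let ?ins = "\<lambda>(m, A). (Suc m, insert m A)" and ?keep = "\<lambda>(m :: nat, A :: nat set). (Suc m, A)"
  have "candidate_total (Suc (Suc g)) \<le> sum ?c (?ins ` B_codes (Suc g) \<union> ?keep ` B_codes g)"
    unfolding candidate_total_def
    by (intro sum_mono2 B_codes_Suc_Suc_subset) (simp_all add: finite_B_codes)
  also have "\<dots> \<le> sum ?c (?ins ` B_codes (Suc g)) + sum ?c (?keep ` B_codes g)"
    by (simp add: sum_Un_nat finite_B_codes)
  also have "\<dots> \<le> sum (?c \<circ> ?ins) (B_codes (Suc g)) + sum (?c \<circ> ?keep) (B_codes g)"
    by (intro add_mono sum_image_le finite_B_codes) simp_all
  also have "sum (?c \<circ> ?ins) (B_codes (Suc g)) = candidate_total (Suc g)"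
    unfolding candidate_total_def
    by (intro sum.cong) (auto simp: B_codes_def e2_candidates_Suc_insert)
  also have "sum (?c \<circ> ?keep) (B_codes g)
      = (\<Sum>(m, A)\<in>B_codes g. card (e2_candidates m A) + (if reflection_free m A then 1 else 0))"
    by (intro sum.cong) (auto simp: B_codes_def card_e2_candidates_Suc)
  also have "\<dots> = candidate_total g + card (reflection_free_codes g)"
    unfolding candidate_total_def reflection_free_codes_def split_beta sum.distrib
    by (simp add: sum.If_cases finite_B_codes Int_def)
  finally show ?thesis by simp
qed

lemma reflection_free_codes_peel:
  assumes "(k + 2, A) \<in> reflection_free_codes g" "0 < k"
  defines "B \<equiv> {b \<in> {1..<k}. Suc b \<in> A}"
  shows "(k, B) \<in> reflection_free_codes (g + card (A \<inter> {1, k + 1}) - 4)"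
    and "4 \<le> g + card (A \<inter> {1, k + 1})"
    and "A = Suc ` B \<union> (A \<inter> {1, k + 1})"
    and "\<not> {1, k + 1} \<subseteq> A"
proof -
  have A: "A \<subseteq> {1..<k + 2}" and card: "card A + g + 2 = 2 * (k + 2)"
    and rf: "reflection_free (k + 2) A"
    using assms(1) unfolding reflection_free_codes_def B_codes_def by auto
  show A_eq: "A = Suc ` B \<union> (A \<inter> {1, k + 1})"
  proof (rule set_eqI)
    fix a
    have "a \<in> Suc ` B" if "a \<in> A" "a \<notin> {1, k + 1}"
    proof -
      have "a \<in> {2..<k + 1}" using that A by auto
      then show ?thesis using that unfolding B_def by (intro image_eqI[of _ _ "a - 1"]) auto
    qed
    then show "a \<in> A \<longleftrightarrow> a \<in> Suc ` B \<union> (A \<inter> {1, k + 1})" unfolding B_def by auto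
  qed
  show "\<not> {1, k + 1} \<subseteq> A"
  proof
    assume "{1, k + 1} \<subseteq> A"
    then have "1 \<in> A" "k + 1 \<in> A" by auto
    then show False using rf unfolding reflection_free_def by fastforce
  qed
  have "card A = card B + card (A \<inter> {1, k + 1})"
    by (subst A_eq, subst card_Un_disjoint) (auto simp: B_def card_image)
  moreover have "B \<subseteq> {1..<k}" unfolding B_def by auto
  moreover from this have "card B \<le> k - 1" using card_mono[of "{1..<k}" B] by simp
  moreover have "reflection_free k B"
    using rf unfolding reflection_free_def B_def by force
  ultimately show "4 \<le> g + card (A \<inter> {1, k + 1})"
    and "(k, B) \<in> reflection_free_codes (g + card (A \<inter> {1, k + 1}) - 4)"
    using card assms(2) unfolding reflection_free_codes_def B_codes_def by auto
qed

lemma reflection_free_codes_subset: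
  "reflection_free_codes g \<subseteq>
     (if g = 0 then {(1, {})} else {}) \<union> (if g = 2 then {(2, {})} else {})
     \<union> (if 4 \<le> g then (\<lambda>(k, B). (k + 2, Suc ` B)) ` reflection_free_codes (g - 4) else {})
     \<union> (if 3 \<le> g then (\<lambda>(k, B). (k + 2, insert 1 (Suc ` B))) ` reflection_free_codes (g - 3)
                    \<union> (\<lambda>(k, B). (k + 2, insert (k + 1) (Suc ` B))) ` reflection_free_codes (g - 3)
        else {})" (is "_ \<subseteq> ?R")
proof
  fix p assume p: "p \<in> reflection_free_codes g"
  then obtain m A where pmA: "p = (m, A)" and A: "A \<subseteq> {1..<m}" and card: "card A + g + 2 = 2 * m"
    and rf: "reflection_free m A"
    unfolding reflection_free_codes_def B_codes_def by auto
  show "p \<in> ?R"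
  proof (cases "m \<le> 2")
    case True
    have "A = {}"
    proof (cases "m = 2")
      case True
      then show ?thesis using A rf unfolding reflection_free_def by fastforce
    qed (use A \<open>m \<le> 2\<close> in auto)
    moreover have "(m = 1 \<and> g = 0) \<or> (m = 2 \<and> g = 2)" using card True \<open>A = {}\<close> by simp presburger
    ultimately show ?thesis using pmA by auto
  next
    case False
    define k where "k = m - 2"
    then have m: "m = k + 2" and "0 < k" using False by auto
    define B where "B = {b \<in> {1..<k}. Suc b \<in> A}"
    note peel = reflection_free_codes_peel[OF p[unfolded pmA m] \<open>0 < k\<close>, folded B_def]
    have "A \<inter> {1, k + 1} = {} \<or> A \<inter> {1, k + 1} = {1} \<or> A \<inter> {1, k + 1} = {k + 1}"
      using peel(4) by auto
    then show ?thesis using peel(1-3) \<open>0 < k\<close> unfolding pmA m by (elim disjE) force+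
  qed
qed

fun reflection_free_bound :: "nat \<Rightarrow> nat" where
  "reflection_free_bound g =
     (if g = 0 \<or> g = 2 then 1 else 0)
     + (if 4 \<le> g then reflection_free_bound (g - 4) else 0)
     + (if 3 \<le> g then 2 * reflection_free_bound (g - 3) else 0)"

declare reflection_free_bound.simps [simp del]

lemma card_reflection_free_codes_le: "card (reflection_free_codes g) \<le> reflection_free_bound g"
proof (induction g rule: less_induct)
  case (less g)
  let ?R = reflection_free_codes
  let ?base = "(if g = 0 then {(1 :: nat, {} :: nat set)} else {}) \<union> (if g = 2 then {(2, {})} else {})"
  let ?four = "if 4 \<le> g then (\<lambda>(k, B). (k + 2, Suc ` B)) ` ?R (g - 4) else {}"
  let ?three = "if 3 \<le> g then (\<lambda>(k, B). (k + 2, insert 1 (Suc ` B))) ` ?R (g - 3)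
                \<union> (\<lambda>(k, B). (k + 2, insert (k + 1) (Suc ` B))) ` ?R (g - 3) else {}"
  have "card (?R g) \<le> card ?base + card ?four + card ?three"
    by (rule card_mono[OF _ reflection_free_codes_subset, THEN order_trans])
      (auto simp: finite_reflection_free_codes intro!: card_Un_le[THEN order_trans] add_mono)
  also have "\<dots> \<le> (if g = 0 \<or> g = 2 then 1 else 0)
      + (if 4 \<le> g then card (?R (g - 4)) else 0) + (if 3 \<le> g then 2 * card (?R (g - 3)) else 0)"
    by (intro add_mono) (auto intro!: card_Un_le[THEN order_trans] add_mono card_image_le
        simp: finite_reflection_free_codes mult_2)
  also have "\<dots> \<le> reflection_free_bound g"
    using less[of "g - 4"] less[of "g - 3"] by (subst reflection_free_bound.simps) auto
  finally show ?case .
qed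

fun candidate_bound :: "nat \<Rightarrow> nat" where
  "candidate_bound 0 = 0"
| "candidate_bound (Suc 0) = 0"
| "candidate_bound (Suc (Suc g)) = candidate_bound (Suc g) + candidate_bound g + reflection_free_bound g"

lemma candidate_total_le_bound: "candidate_total g \<le> candidate_bound g"
proof (induction g rule: candidate_bound.induct)
  case (3 g)
  then show ?case
    using candidate_total_Suc_Suc_le[of g] card_reflection_free_codes_le[of g] by simp
qed (simp_all add: candidate_total_eq_0)

lemma reflection_free_bound_add_4:
  "reflection_free_bound (n + 4) = reflection_free_bound n + 2 * reflection_free_bound (n + 1)"
  by (subst reflection_free_bound.simps) simp

lemma candidate_bound_potential:
  "8 \<le> n \<Longrightarrow> candidate_bound n + 2 * reflection_free_bound n + reflection_free_bound (n + 1)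
     + reflection_free_bound (n + 2) \<le> 2 * fib (n + 1)"
proof (induction n rule: less_induct)
  (* Writing P n for the left-hand side, the recursions of candidate_bound and
     reflection_free_bound give P (n + 2) = P (n + 1) + P n - reflection_free_bound (n + 1).
     The base case n = 8 is the first with P n \<le> 2 F (n + 1). *)
  case (less n)
  show ?case
  proof (cases "n \<le> 9")
    case True
    with less.prems have "n = 8 \<or> n = 9" by auto
    then show ?thesis by (elim disjE) (simp_all add: eval_nat_numeral reflection_free_bound.simps)
  next
    case False
    define j where "j = n - 2"
    then have n: "n = j + 2" and "8 \<le> j" using False by auto
    then show ?thesis
      using less.IH[of j] less.IH[of "Suc j"] reflection_free_bound_add_4[of j]
      by (simp add: eval_nat_numeral)
  qed
qed

lemma candidate_bound_le_fib: "candidate_bound n \<le> 2 * fib (n + 1)"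
proof (cases "n < 8")
  case True
  then have "n \<in> {0, 1, 2, 3, 4, 5, 6, 7}" by auto
  then show ?thesis
    by (elim insertE emptyE) (simp_all add: eval_nat_numeral reflection_free_bound.simps)
next
  case False
  then show ?thesis using candidate_bound_potential[of n] by simp
qed

theorem proposition4p1:
  fixes g :: nat
  shows "(\<Sum>S\<in>B_set g. e2 S) \<le> 2 * int (fib (g + 1))"
proof -
  let ?c = "\<lambda>(m, A). int (card (e2_candidates m A))"
  have "(\<Sum>S\<in>B_set g. e2 S) \<le> (\<Sum>S\<in>B_set g. ?c (B_code S))"
  proof (rule sum_mono)
    fix S assume "S \<in> B_set g"
    moreover obtain m A where "B_code S = (m, A)" by fastforce
    ultimately show "e2 S \<le> ?c (B_code S)"
      using e2_le_card_e2_candidates[of S] unfolding B_set_def by auto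
  qed
  also have "\<dots> = sum ?c (B_code ` B_set g)"
    by (simp add: sum.reindex inj_on_B_code)
  also have "\<dots> \<le> sum ?c (B_codes g)"
    by (rule sum_mono2) (auto simp: finite_B_codes B_code_in_B_codes)
  also have "\<dots> = int (candidate_total g)"
    unfolding candidate_total_def by (simp add: split_beta)
  also have "\<dots> \<le> 2 * int (fib (g + 1))"
    using candidate_total_le_bound[of g] candidate_bound_le_fib[of g] by linarith
  finally show ?thesis .
qed

end
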